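(* Let $Q$ be an automorphic loop and $x,y\in Q$. If either $x^{-1}(xy^2)=(xy)(x^{-1}y)$ or $x^{-1}(xy^2)=(x^{-1}y)(xy)$, then $xy=yx$.
   Context: A loop is a set with a binary operation in which all equations $ax=b$, $ya=b$ are uniquely solvable and which has a two-sided identity. For $a\in L$, $R_a:x\mapsto xa$, $L_a:x\mapsto ax$; the inner mapping group is the stabilizer of the identity in the group generated by all $R_a,L_a$. A loop is automorphic if every inner mapping is an automorphism. Automorphic loops are power associative, so $x^{-1}$ and $y^2$ are well defined. *)

theory Defs
  imports Main
begin

definition loop :: "('a \<Rightarrow> 'a \<Rightarrow> 'a) \<Rightarrow> 'a \<Rightarrow> bool" where
  "loop m e \<longleftrightarrow>
     (\<forall>a b. \<exists>!x. m a x = b) \<and> (\<forall>a b. \<exists>!y. m y a = b) \<and>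
     (\<forall>x. m e x = x \<and> m x e = x)"

definition rmult :: "('a \<Rightarrow> 'a \<Rightarrow> 'a) \<Rightarrow> 'a \<Rightarrow> 'a \<Rightarrow> 'a" where
  "rmult m a = (\<lambda>x. m x a)"

definition lmult :: "('a \<Rightarrow> 'a \<Rightarrow> 'a) \<Rightarrow> 'a \<Rightarrow> 'a \<Rightarrow> 'a" where
  "lmult m a = (\<lambda>x. m a x)"

inductive_set mlt_group :: "('a \<Rightarrow> 'a \<Rightarrow> 'a) \<Rightarrow> ('a \<Rightarrow> 'a) set" for m where
  mlt_id: "id \<in> mlt_group m"
| mlt_R: "f \<in> mlt_group m \<Longrightarrow> rmult m a \<circ> f \<in> mlt_group m"
| mlt_L: "f \<in> mlt_group m \<Longrightarrow> lmult m a \<circ> f \<in> mlt_group m"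
| mlt_Rinv: "f \<in> mlt_group m \<Longrightarrow> inv (rmult m a) \<circ> f \<in> mlt_group m"
| mlt_Linv: "f \<in> mlt_group m \<Longrightarrow> inv (lmult m a) \<circ> f \<in> mlt_group m"

definition inner_maps :: "('a \<Rightarrow> 'a \<Rightarrow> 'a) \<Rightarrow> 'a \<Rightarrow> ('a \<Rightarrow> 'a) set" where
  "inner_maps m e = {f \<in> mlt_group m. f e = e}"

definition loop_aut :: "('a \<Rightarrow> 'a \<Rightarrow> 'a) \<Rightarrow> ('a \<Rightarrow> 'a) \<Rightarrow> bool" where
  "loop_aut m f \<longleftrightarrow> bij f \<and> (\<forall>x y. f (m x y) = m (f x) (f y))"

definition automorphic_loop :: "('a \<Rightarrow> 'a \<Rightarrow> 'a) \<Rightarrow> 'a \<Rightarrow> bool" where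
  "automorphic_loop m e \<longleftrightarrow> loop m e \<and> (\<forall>f \<in> inner_maps m e. loop_aut m f)"

text \<open>Inverse (well defined and two-sided in automorphic loops, which are
  power associative); taken as the unique right inverse.\<close>
definition loop_inv :: "('a \<Rightarrow> 'a \<Rightarrow> 'a) \<Rightarrow> 'a \<Rightarrow> 'a \<Rightarrow> 'a" where
  "loop_inv m e x = (THE y. m x y = e)"

end

theory Submission
  imports Defs
begin

text \<open>The standard inner mappings \<open>T x z = x\<setminus>(zx)\<close>, \<open>L x y z = (yx)\<setminus>(y(xz))\<close> and
  \<open>R x y z = ((zx)y)/(xy)\<close> are automorphisms.  Since \<open>L x\<^sup>-\<^sup>1 (yx)\<close> fixes \<open>yx\<close> and maps
  \<open>x\<close> to \<open>p\<setminus>(yx)\<close>, where \<open>p = (yx)x\<^sup>-\<^sup>1\<close>, it maps \<open>y = (yx)/x\<close> to \<open>p\<close>; this says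
  \<open>(yx)(x\<^sup>-\<^sup>1y) = p\<^sup>2 = x\<^sup>-\<^sup>1(xy\<^sup>2)\<close>, the last step because \<open>(zx)x\<^sup>-\<^sup>1 = x\<^sup>-\<^sup>1(xz)\<close>, which
  comes from evaluating \<open>R x y\<close> and \<open>R (y/(xy)) (xy)\<close>.  The first hypothesis then
  cancels to \<open>xy = yx\<close>; the second, read with \<open>x\<^sup>-\<^sup>1\<close> in place of \<open>x\<close>, cancels to
  \<open>x\<^sup>-\<^sup>1y = yx\<^sup>-\<^sup>1\<close>, and the elements commuting with \<open>y\<close> are the fixed points of the
  automorphism \<open>T y\<close>, hence closed under inverses.\<close>

lemma mlt_group_comp:
  assumes "f \<in> mlt_group m" and "g \<in> mlt_group m"
  shows "f \<circ> g \<in> mlt_group m"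
  using assms by (induction f rule: mlt_group.induct) (auto simp: comp_assoc intro: mlt_group.intros)

lemma mlt_group_generators:
  "lmult m a \<in> mlt_group m" "rmult m a \<in> mlt_group m"
  "inv (lmult m a) \<in> mlt_group m" "inv (rmult m a) \<in> mlt_group m"
  using mlt_group.intros(2-5)[OF mlt_group.mlt_id, of m a] by simp_all

locale automorphic =
  fixes mult :: "'a \<Rightarrow> 'a \<Rightarrow> 'a" (infixl "\<cdot>" 70) and e :: 'a
  assumes automorphic: "automorphic_loop (\<cdot>) e"
begin

definition ldiv :: "'a \<Rightarrow> 'a \<Rightarrow> 'a" (infixl "\<setminus>" 70)
  where "x \<setminus> y = (THE z. x \<cdot> z = y)"

definition rdiv :: "'a \<Rightarrow> 'a \<Rightarrow> 'a" (infixl "\<sslash>" 70)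
  where "y \<sslash> x = (THE z. z \<cdot> x = y)"

abbreviation inverse_elt :: "'a \<Rightarrow> 'a" ("_\<^sup>-\<^sup>1" [1000] 1000)
  where "x\<^sup>-\<^sup>1 \<equiv> loop_inv (\<cdot>) e x"

lemma loop: "loop (\<cdot>) e"
  using automorphic by (simp add: automorphic_loop_def)

lemma unit_left [simp]: "e \<cdot> x = x" and unit_right [simp]: "x \<cdot> e = x"
  using loop by (simp_all add: loop_def)

lemma mult_ldiv [simp]: "x \<cdot> (x \<setminus> y) = y" and ldiv_mult [simp]: "x \<setminus> (x \<cdot> y) = y"
  using loop theI'[of "\<lambda>z. x \<cdot> z = y"] the1_equality[of "\<lambda>z. x \<cdot> z = x \<cdot> y"]
  by (auto simp: loop_def ldiv_def)

lemma rdiv_mult [simp]: "(y \<sslash> x) \<cdot> x = y" and mult_rdiv [simp]: "(y \<cdot> x) \<sslash> x = y"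
  using loop theI'[of "\<lambda>z. z \<cdot> x = y"] the1_equality[of "\<lambda>z. z \<cdot> x = y \<cdot> x"]
  by (auto simp: loop_def rdiv_def)

lemma mult_left_cancel [simp]: "x \<cdot> y = x \<cdot> z \<longleftrightarrow> y = z"
  by (metis ldiv_mult)

lemma mult_right_cancel [simp]: "y \<cdot> x = z \<cdot> x \<longleftrightarrow> y = z"
  by (metis mult_rdiv)

lemma ldiv_self [simp]: "x \<setminus> x = e" and unit_ldiv [simp]: "e \<setminus> x = x"
  by (metis ldiv_mult unit_right) (metis ldiv_mult unit_left)

lemma rdiv_self [simp]: "x \<sslash> x = e" and rdiv_unit [simp]: "x \<sslash> e = x"
  by (metis mult_rdiv unit_left) (metis mult_rdiv unit_right)

lemma rdiv_eq_iff: "y \<sslash> x = z \<longleftrightarrow> y = z \<cdot> x"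
  by (metis mult_rdiv rdiv_mult)

lemma inverse_eq_ldiv: "x\<^sup>-\<^sup>1 = x \<setminus> e"
  by (simp add: loop_inv_def ldiv_def)

lemma mult_inverse_right [simp]: "x \<cdot> x\<^sup>-\<^sup>1 = e"
  by (simp add: inverse_eq_ldiv)

lemma inverse_unique: "x \<cdot> y = e \<Longrightarrow> x\<^sup>-\<^sup>1 = y"
  by (metis inverse_eq_ldiv ldiv_mult)

lemma inv_lmult: "inv (lmult (\<cdot>) a) = (\<lambda>z. a \<setminus> z)"
  by (rule inv_equality) (simp_all add: lmult_def)

lemma inv_rmult: "inv (rmult (\<cdot>) a) = (\<lambda>z. z \<sslash> a)"
  by (rule inv_equality) (simp_all add: rmult_def)

lemma inner_map_mult:
  assumes "f \<in> inner_maps (\<cdot>) e"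
  shows "f (x \<cdot> y) = f x \<cdot> f y"
  using assms automorphic by (simp add: automorphic_loop_def loop_aut_def)

lemma inner_map_unit:
  assumes "f \<in> inner_maps (\<cdot>) e"
  shows "f e = e"
  using assms by (simp add: inner_maps_def)

lemma inner_map_rdiv:
  assumes "f \<in> inner_maps (\<cdot>) e"
  shows "f (y \<sslash> x) = f y \<sslash> f x"
  by (metis assms inner_map_mult rdiv_eq_iff rdiv_mult)

lemma inner_map_inverse:
  assumes "f \<in> inner_maps (\<cdot>) e"
  shows "f (x\<^sup>-\<^sup>1) = (f x)\<^sup>-\<^sup>1"
  by (metis assms inner_map_mult inner_map_unit inverse_unique mult_inverse_right)

definition Tmap :: "'a \<Rightarrow> 'a \<Rightarrow> 'a"
  where "Tmap x = inv (lmult (\<cdot>) x) \<circ> rmult (\<cdot>) x"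

definition Lmap :: "'a \<Rightarrow> 'a \<Rightarrow> 'a \<Rightarrow> 'a"
  where "Lmap x y = inv (lmult (\<cdot>) (y \<cdot> x)) \<circ> lmult (\<cdot>) y \<circ> lmult (\<cdot>) x"

definition Rmap :: "'a \<Rightarrow> 'a \<Rightarrow> 'a \<Rightarrow> 'a"
  where "Rmap x y = inv (rmult (\<cdot>) (x \<cdot> y)) \<circ> rmult (\<cdot>) y \<circ> rmult (\<cdot>) x"

lemma Tmap_apply [simp]: "Tmap x z = x \<setminus> (z \<cdot> x)"
  by (simp add: Tmap_def inv_lmult) (simp add: rmult_def)

lemma Lmap_apply [simp]: "Lmap x y z = (y \<cdot> x) \<setminus> (y \<cdot> (x \<cdot> z))"
  by (simp add: Lmap_def inv_lmult) (simp add: lmult_def)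

lemma Rmap_apply [simp]: "Rmap x y z = ((z \<cdot> x) \<cdot> y) \<sslash> (x \<cdot> y)"
  by (simp add: Rmap_def inv_rmult) (simp add: rmult_def)

lemma Tmap_inner: "Tmap x \<in> inner_maps (\<cdot>) e"
proof -
  have "Tmap x \<in> mlt_group (\<cdot>)"
    unfolding Tmap_def by (intro mlt_group_comp mlt_group_generators)
  then show ?thesis by (simp add: inner_maps_def)
qed

lemma Lmap_inner: "Lmap x y \<in> inner_maps (\<cdot>) e"
proof -
  have "Lmap x y \<in> mlt_group (\<cdot>)"
    unfolding Lmap_def by (intro mlt_group_comp mlt_group_generators)
  then show ?thesis by (simp add: inner_maps_def)
qed

lemma Rmap_inner: "Rmap x y \<in> inner_maps (\<cdot>) e"
proof -
  have "Rmap x y \<in> mlt_group (\<cdot>)"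
    unfolding Rmap_def by (intro mlt_group_comp mlt_group_generators)
  then show ?thesis by (simp add: inner_maps_def)
qed

lemma flexible: "(x \<cdot> y) \<cdot> x = x \<cdot> (y \<cdot> x)"
proof -
  have "Tmap x (x \<cdot> y) = Tmap x x \<cdot> Tmap x y"
    by (rule inner_map_mult[OF Tmap_inner])
  then have "x \<setminus> ((x \<cdot> y) \<cdot> x) = y \<cdot> x"
    by simp
  then show ?thesis
    by (metis mult_ldiv)
qed

lemma mult_inverse_left [simp]: "x\<^sup>-\<^sup>1 \<cdot> x = e"
proof -
  have "x \<cdot> (x\<^sup>-\<^sup>1 \<cdot> x) = x \<cdot> e"
    by (simp flip: flexible)
  then show ?thesis
    by (simp only: mult_left_cancel)
qed

lemma inverse_inverse [simp]: "(x\<^sup>-\<^sup>1)\<^sup>-\<^sup>1 = x"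
  by (rule inverse_unique) simp

lemma Lmap_fixes: "Lmap x y y = y"
  by (simp flip: flexible)

lemma Rmap_fixes: "Rmap x y y = y"
  by (simp add: flexible)

lemma lmult_inverse_commute: "x \<cdot> (x\<^sup>-\<^sup>1 \<cdot> y) = x\<^sup>-\<^sup>1 \<cdot> (x \<cdot> y)"
proof -
  have "Lmap x\<^sup>-\<^sup>1 x (x \<cdot> y) = Lmap x\<^sup>-\<^sup>1 x x \<cdot> Lmap x\<^sup>-\<^sup>1 x y"
    by (rule inner_map_mult[OF Lmap_inner])
  then have "x \<cdot> (x\<^sup>-\<^sup>1 \<cdot> (x \<cdot> y)) = x \<cdot> (x \<cdot> (x\<^sup>-\<^sup>1 \<cdot> y))"
    by simp
  then show ?thesis
    by simp
qed

lemma rmult_inverse_commute: "(y \<cdot> x) \<cdot> x\<^sup>-\<^sup>1 = (y \<cdot> x\<^sup>-\<^sup>1) \<cdot> x"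
proof -
  have "Rmap x\<^sup>-\<^sup>1 x (y \<cdot> x) = Rmap x\<^sup>-\<^sup>1 x y \<cdot> Rmap x\<^sup>-\<^sup>1 x x"
    by (rule inner_map_mult[OF Rmap_inner])
  then have "((y \<cdot> x) \<cdot> x\<^sup>-\<^sup>1) \<cdot> x = ((y \<cdot> x\<^sup>-\<^sup>1) \<cdot> x) \<cdot> x"
    by simp
  then show ?thesis
    by simp
qed

lemma rmult_inverse_eq_lmult_inverse: "(y \<cdot> x) \<cdot> x\<^sup>-\<^sup>1 = x\<^sup>-\<^sup>1 \<cdot> (x \<cdot> y)"
proof -
  define c where "c = y \<sslash> (x \<cdot> y)"
  have c_mult: "c \<cdot> (x \<cdot> y) = y"
    by (simp add: c_def)
  have inverse_square_mult: "(x\<^sup>-\<^sup>1 \<cdot> x\<^sup>-\<^sup>1) \<cdot> x = x\<^sup>-\<^sup>1"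
    using rmult_inverse_commute[of "x\<^sup>-\<^sup>1" x] by simp
  have Rmap_inverse: "Rmap x y x\<^sup>-\<^sup>1 = c"
    by (simp add: c_def)
  have "c \<cdot> c = (x\<^sup>-\<^sup>1 \<cdot> y) \<sslash> (x \<cdot> y)"
    using inner_map_mult[OF Rmap_inner, of x y "x\<^sup>-\<^sup>1" "x\<^sup>-\<^sup>1"]
    by (simp add: c_def inverse_square_mult)
  then have Rmap_c: "Rmap c (x \<cdot> y) c = x\<^sup>-\<^sup>1"
    by (simp add: c_mult)
  have "Rmap c (x \<cdot> y) y = Rmap c (x \<cdot> y) (c \<cdot> (x \<cdot> y))"
    by (simp only: c_mult)
  also have "\<dots> = Rmap c (x \<cdot> y) c \<cdot> Rmap c (x \<cdot> y) (x \<cdot> y)"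
    by (rule inner_map_mult[OF Rmap_inner])
  also have "\<dots> = x\<^sup>-\<^sup>1 \<cdot> (x \<cdot> y)"
    by (simp only: Rmap_c Rmap_fixes)
  finally have "(y \<cdot> c) \<cdot> (x \<cdot> y) = (x\<^sup>-\<^sup>1 \<cdot> (x \<cdot> y)) \<cdot> y"
    by (simp add: c_mult rdiv_eq_iff)
  moreover
  have "Rmap x y (y \<cdot> x\<^sup>-\<^sup>1) = Rmap x y y \<cdot> Rmap x y x\<^sup>-\<^sup>1"
    by (rule inner_map_mult[OF Rmap_inner])
  then have "((y \<cdot> x) \<cdot> x\<^sup>-\<^sup>1) \<cdot> y = (y \<cdot> c) \<cdot> (x \<cdot> y)"
    by (simp only: Rmap_fixes Rmap_inverse) (simp add: rdiv_eq_iff flip: rmult_inverse_commute)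
  ultimately show ?thesis
    by simp
qed

lemma inverse_square_identity: "x\<^sup>-\<^sup>1 \<cdot> (x \<cdot> (y \<cdot> y)) = (y \<cdot> x) \<cdot> (x\<^sup>-\<^sup>1 \<cdot> y)"
proof -
  define p where "p = (y \<cdot> x) \<cdot> x\<^sup>-\<^sup>1"
  have "Lmap x\<^sup>-\<^sup>1 (y \<cdot> x) y = Lmap x\<^sup>-\<^sup>1 (y \<cdot> x) ((y \<cdot> x) \<sslash> x)"
    by simp
  also have "\<dots> = (y \<cdot> x) \<sslash> Lmap x\<^sup>-\<^sup>1 (y \<cdot> x) x"
    by (simp only: inner_map_rdiv[OF Lmap_inner] Lmap_fixes)
  also have "\<dots> = p"
    by (simp add: p_def rdiv_eq_iff)
  finally have "(y \<cdot> x) \<cdot> (x\<^sup>-\<^sup>1 \<cdot> y) = p \<cdot> p"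
    by (metis Lmap_apply mult_ldiv p_def)
  also have "\<dots> = ((y \<cdot> y) \<cdot> x) \<cdot> x\<^sup>-\<^sup>1"
    using inner_map_mult[OF Rmap_inner, of x "x\<^sup>-\<^sup>1" y y] by (simp add: p_def)
  finally show ?thesis
    by (simp add: rmult_inverse_eq_lmult_inverse)
qed

lemma commute_inverse:
  assumes "x \<cdot> y = y \<cdot> x"
  shows "x\<^sup>-\<^sup>1 \<cdot> y = y \<cdot> x\<^sup>-\<^sup>1"
proof -
  have "Tmap y x = x"
    by (simp add: assms)
  then have "Tmap y x\<^sup>-\<^sup>1 = x\<^sup>-\<^sup>1"
    by (simp only: inner_map_inverse[OF Tmap_inner])
  then show ?thesis
    by (metis Tmap_apply mult_ldiv)
qed

lemma commute_if_xy_left_factor: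
  assumes "x\<^sup>-\<^sup>1 \<cdot> (x \<cdot> (y \<cdot> y)) = (x \<cdot> y) \<cdot> (x\<^sup>-\<^sup>1 \<cdot> y)"
  shows "x \<cdot> y = y \<cdot> x"
  using assms by (simp add: inverse_square_identity)

lemma commute_if_xy_right_factor:
  assumes "x\<^sup>-\<^sup>1 \<cdot> (x \<cdot> (y \<cdot> y)) = (x\<^sup>-\<^sup>1 \<cdot> y) \<cdot> (x \<cdot> y)"
  shows "x \<cdot> y = y \<cdot> x"
proof -
  have "(y \<cdot> x\<^sup>-\<^sup>1) \<cdot> (x \<cdot> y) = x \<cdot> (x\<^sup>-\<^sup>1 \<cdot> (y \<cdot> y))"
    using inverse_square_identity[of "x\<^sup>-\<^sup>1" y] by simp
  also have "\<dots> = (x\<^sup>-\<^sup>1 \<cdot> y) \<cdot> (x \<cdot> y)"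
    by (simp add: lmult_inverse_commute assms)
  finally have "x\<^sup>-\<^sup>1 \<cdot> y = y \<cdot> x\<^sup>-\<^sup>1"
    by simp
  then show ?thesis
    using commute_inverse[of "x\<^sup>-\<^sup>1" y] by simp
qed

end

theorem corollary3p1:
  fixes m :: "'a \<Rightarrow> 'a \<Rightarrow> 'a" and e x y :: 'a
  assumes "automorphic_loop m e"
    and "m (loop_inv m e x) (m x (m y y)) = m (m x y) (m (loop_inv m e x) y)
         \<or> m (loop_inv m e x) (m x (m y y)) = m (m (loop_inv m e x) y) (m x y)"
  shows "m x y = m y x"
proof -
  interpret automorphic m e
    by (rule automorphic.intro) (fact assms(1))
  show ?thesis
    using assms(2) commute_if_xy_left_factor commute_if_xy_right_factor by blast
qed

end
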